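(* Let $1\le W<d<\infty$ be integers, let $a_{ij}\in\mathbb R$ ($1\le i\le d$, $1\le j\le W$) be arbitrary constants, and let $\Phi:\mathbb R^W\to\mathbb R^d$ be given by $\Phi_i(\mathbf w)=\sin\big(\sum_{j=1}^W a_{ij}w_j\big)$, $i=1,\ldots,d$. Then, regardless of the constants $a_{ij}$, the set $F_\Phi$ of GF-learnable targets has Lebesgue measure $0$ in $\mathbb R^d$.
   Context: For a target $\mathbf f\in\mathbb R^d$, let $L_{\mathbf f}(\mathbf w)=\frac12\|\mathbf f-\Phi(\mathbf w)\|^2$ and let $\mathbf w(t)$, $t\ge0$, be the solution of the gradient flow $\frac{d\mathbf w}{dt}=-\nabla_{\mathbf w}L_{\mathbf f}(\mathbf w(t))$ with $\mathbf w(0)=\mathbf 0$. The set of GF-learnable targets is $F_\Phi=\{\mathbf f\in\mathbb R^d:\inf_{t\ge0}L_{\mathbf f}(\mathbf w(t))=0\}$. *)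

theory Defs
  imports "HOL-Analysis.Analysis"
begin

definition loss :: "('w \<Rightarrow> 'd::real_inner) \<Rightarrow> 'd \<Rightarrow> 'w \<Rightarrow> real" where
  "loss Phi f w = (1/2) * (norm (f - Phi w))\<^sup>2"

definition is_gradient :: "('a::real_inner \<Rightarrow> real) \<Rightarrow> 'a \<Rightarrow> 'a \<Rightarrow> bool" where
  "is_gradient g G x \<longleftrightarrow> (g has_derivative (\<lambda>h. G \<bullet> h)) (at x)"

definition gf_solution :: "('w::real_inner \<Rightarrow> 'd::real_inner) \<Rightarrow> 'd \<Rightarrow> (real \<Rightarrow> 'w) \<Rightarrow> bool" where
  "gf_solution Phi f w \<longleftrightarrow> w 0 = 0 \<and>
     (\<forall>t\<ge>0. \<exists>G. is_gradient (loss Phi f) G (w t) \<and>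
                  (w has_vector_derivative (- G)) (at t within {0..}))"

definition GF_learnable :: "('w::real_inner \<Rightarrow> 'd::real_inner) \<Rightarrow> 'd set" where
  "GF_learnable Phi = {f. \<exists>w. gf_solution Phi f w \<and> (INF t\<in>{0..}. loss Phi f (w t)) = 0}"

definition sin_model :: "real^'w^'d \<Rightarrow> real^'w \<Rightarrow> real^'d" where
  "sin_model a w = (\<chi> i. sin (\<Sum>j\<in>UNIV. a $ i $ j * w $ j))"

end

theory Submission
  imports Defs
begin

text \<open>Along the gradient flow the loss is nonincreasing, so a learnable target \<open>f\<close> is the limit of
  \<open>\<Phi>(w(t)) = sin (A w(t))\<close> (componentwise). Once \<open>|sin u\<^sub>i(t) - f\<^sub>i| < 1\<close> for all later \<open>t\<close>, the
  continuous argument \<open>u\<^sub>i(t) = (A w(t))\<^sub>i\<close> can never reach a point where \<open>sin\<close> takes the value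
  \<open>\<plusminus>1\<close> farthest from \<open>f\<^sub>i\<close>; these points are \<open>2\<pi>\<close>-periodic, so \<open>u\<^sub>i\<close> oscillates by at most
  \<open>2\<pi>\<close>. Hence \<open>A w(t)\<close> eventually stays in a compact subset of the range of \<open>A\<close>, whose image under
  \<open>sin\<close> is closed, so \<open>f\<close> lies in the range of \<open>\<Phi>\<close>. That range is the image of \<open>\<real>\<^sup>W\<close> under a
  differentiable map into \<open>\<real>\<^sup>d\<close> with \<open>W < d\<close>, hence a null set.\<close>

lemma periodic_point_in_period:
  fixes p :: real
  assumes "p > 0"
  obtains k :: int where "z \<le> x0 + p * k" "x0 + p * k < z + p"
proof
  define k where "k = \<lceil>(z - x0) / p\<rceil>"
  have "(z - x0) / p \<le> k" "k < (z - x0) / p + 1"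
    unfolding k_def by linarith+
  then show "z \<le> x0 + p * k" "x0 + p * k < z + p"
    using assms by (simp_all add: field_simps)
qed

lemma continuous_avoiding_periodic_points_oscillation_le:
  fixes v :: "real \<Rightarrow> real"
  assumes "p > 0" and cont: "continuous_on {s..t} v" and "s \<le> t"
    and avoid: "\<And>r k. r \<in> {s..t} \<Longrightarrow> v r \<noteq> x0 + p * of_int k"
  shows "\<bar>v t - v s\<bar> \<le> p"
proof (rule ccontr)
  assume "\<not> \<bar>v t - v s\<bar> \<le> p"
  then have far: "min (v s) (v t) + p < max (v s) (v t)"
    by linarith
  obtain k :: int where k: "min (v s) (v t) \<le> x0 + p * k" "x0 + p * k < min (v s) (v t) + p"
    using periodic_point_in_period[OF \<open>p > 0\<close>] .
  have "connected (v ` {s..t})"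
    using cont by (rule connected_continuous_image) simp
  moreover have "min (v s) (v t) \<in> v ` {s..t}" "max (v s) (v t) \<in> v ` {s..t}"
    using \<open>s \<le> t\<close> by (simp_all add: min_def max_def)
  ultimately have "x0 + p * k \<in> v ` {s..t}"
    by (rule connectedD_interval) (use k far in linarith)+
  then show False
    using avoid by (metis imageE)
qed

lemma sin_close_oscillation_le:
  fixes v :: "real \<Rightarrow> real"
  assumes "continuous_on {s..t} v" "s \<le> t" and close: "\<And>r. r \<in> {s..t} \<Longrightarrow> \<bar>sin (v r) - c\<bar> < 1"
  shows "\<bar>v t - v s\<bar> \<le> 2 * pi"
proof (rule continuous_avoiding_periodic_points_oscillation_le[OF _ assms(1,2)])
  \<comment> \<open>\<open>sin\<close> takes the value \<open>\<plusminus>1\<close> farthest from \<open>c\<close> exactly on \<open>x0 + 2\<pi>\<int>\<close>.\<close>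
  define x0 where "x0 = (if c \<ge> 0 then - pi / 2 else pi / 2)"
  have far: "\<bar>sin (x0 + 2 * pi * of_int k) - c\<bar> \<ge> 1" for k :: int
    by (simp add: x0_def sin_add)
  show "v r \<noteq> x0 + 2 * pi * of_int k" if "r \<in> {s..t}" for r k
    using close[OF that] far[of k] by auto
qed simp

lemma gf_solution_loss_derivative:
  assumes "gf_solution Phi f w" "0 \<le> t"
  obtains D where "D \<le> 0" "((\<lambda>t. loss Phi f (w t)) has_real_derivative D) (at t within {0..})"
proof -
  obtain G where G: "(loss Phi f has_derivative (\<lambda>h. G \<bullet> h)) (at (w t))"
    "(w has_vector_derivative - G) (at t within {0..})"
    using assms unfolding gf_solution_def is_gradient_def by blast
  have "((loss Phi f \<circ> w) has_derivative (*) (- (G \<bullet> G))) (at t within {0..})"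
    by (rule has_derivative_eq_rhs[OF diff_chain_within[OF G(2)[unfolded has_vector_derivative_def]
          has_derivative_at_withinI[OF G(1)]]]) (auto simp: fun_eq_iff)
  then have "((\<lambda>t. loss Phi f (w t)) has_real_derivative - (G \<bullet> G)) (at t within {0..})"
    by (simp add: has_field_derivative_def comp_def)
  moreover have "- (G \<bullet> G) \<le> 0"
    by simp
  ultimately show ?thesis
    using that by blast
qed

lemma gf_solution_loss_antimono:
  assumes gf: "gf_solution Phi f w" and "0 \<le> s" "s \<le> t"
  shows "loss Phi f (w t) \<le> loss Phi f (w s)"
proof (rule DERIV_nonpos_imp_decreasing_open[OF \<open>s \<le> t\<close>])
  fix r assume "s < r" "r < t"
  then have r: "r \<in> interior {0..}" and "0 \<le> r"
    using \<open>0 \<le> s\<close> by simp_all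
  obtain D where "D \<le> 0" "((\<lambda>t. loss Phi f (w t)) has_real_derivative D) (at r within {0..})"
    using gf_solution_loss_derivative[OF gf \<open>0 \<le> r\<close>] .
  then show "\<exists>y. ((\<lambda>t. loss Phi f (w t)) has_real_derivative y) (at r) \<and> y \<le> 0"
    unfolding at_within_interior[OF r] by blast
next
  have "continuous (at r within {0..}) (\<lambda>t. loss Phi f (w t))" if "0 \<le> r" for r
  proof -
    obtain D where "((\<lambda>t. loss Phi f (w t)) has_real_derivative D) (at r within {0..})"
      using gf_solution_loss_derivative[OF gf \<open>0 \<le> r\<close>] .
    then show ?thesis
      by (rule DERIV_continuous)
  qed
  then have "continuous_on {0..} (\<lambda>t. loss Phi f (w t))"
    by (simp add: continuous_on_eq_continuous_within)
  then show "continuous_on {s..t} (\<lambda>t. loss Phi f (w t))"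
    by (rule continuous_on_subset) (use \<open>0 \<le> s\<close> in auto)
qed

lemma gf_solution_continuous_on:
  assumes "gf_solution Phi f w"
  shows "continuous_on {0..} w"
  unfolding continuous_on_eq_continuous_within
proof
  fix t :: real assume "t \<in> {0..}"
  then obtain G where "(w has_vector_derivative - G) (at t within {0..})"
    using assms unfolding gf_solution_def by auto
  then show "continuous (at t within {0..}) w"
    by (rule has_vector_derivative_continuous)
qed

lemma GF_learnable_imp_tendsto:
  assumes "f \<in> GF_learnable Phi"
  obtains w where "gf_solution Phi f w" "((\<lambda>t. Phi (w t)) \<longlongrightarrow> f) at_top"
proof -
  obtain w where gf: "gf_solution Phi f w" and inf: "(INF t\<in>{0..}. loss Phi f (w t)) = 0"
    using assms unfolding GF_learnable_def by blast
  have "\<forall>\<^sub>F t in at_top. dist (Phi (w t)) f < e" if "e > 0" for e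
  proof -
    have "bdd_below ((\<lambda>t. loss Phi f (w t)) ` {0..})"
      by (rule bdd_belowI[of _ 0]) (auto simp: loss_def)
    moreover have "(INF t\<in>{0..}. loss Phi f (w t)) < e\<^sup>2 / 2"
      using inf \<open>e > 0\<close> by simp
    ultimately obtain T where "T \<ge> 0" and T: "loss Phi f (w T) < e\<^sup>2 / 2"
      by (subst (asm) cINF_less_iff) auto
    have "dist (Phi (w t)) f < e" if "t \<ge> T" for t
    proof -
      have "loss Phi f (w t) < e\<^sup>2 / 2"
        using gf_solution_loss_antimono[OF gf \<open>T \<ge> 0\<close> that] T by linarith
      then have "(norm (f - Phi (w t)))\<^sup>2 < e\<^sup>2"
        by (simp add: loss_def)
      then show ?thesis
        using \<open>e > 0\<close> by (simp add: dist_norm norm_minus_commute power_less_imp_less_base)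
    qed
    then show ?thesis
      by (auto simp: eventually_at_top_linorder)
  qed
  then have "((\<lambda>t. Phi (w t)) \<longlongrightarrow> f) at_top"
    by (rule tendstoI)
  with gf show ?thesis
    by (rule that)
qed

definition vec_sin :: "real^'n \<Rightarrow> real^'n" where
  "vec_sin v = (\<chi> i. sin (v $ i))"

lemma sin_model_eq_vec_sin: "sin_model a w = vec_sin (a *v w)"
  by (simp add: sin_model_def vec_sin_def matrix_vector_mult_def)

lemma continuous_on_vec_sin: "continuous_on S vec_sin"
  unfolding vec_sin_def by (intro continuous_intros)

lemma vec_sin_differentiable:
  fixes v :: "real^'n"
  shows "vec_sin differentiable at v"
proof (rule differentiable_componentwise_within[THEN iffD2], rule ballI)
  fix b :: "real^'n" assume "b \<in> Basis"
  then obtain k where "b = axis k 1"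
    unfolding Basis_vec_def by auto
  then have "(\<lambda>x. vec_sin x \<bullet> b) = (\<lambda>x. sin (x $ k))"
    by (simp add: vec_sin_def inner_axis)
  moreover have "sin differentiable at (v $ k)"
    using DERIV_sin unfolding differentiable_def has_field_derivative_def by blast
  then have "(\<lambda>x. sin (x $ k)) differentiable at v"
    by (rule differentiable_compose) (intro bounded_linear_imp_differentiable bounded_linear_vec_nth)
  ultimately show "(\<lambda>x. vec_sin x \<bullet> b) differentiable at v"
    by simp
qed

lemma sin_model_differentiable_on: "sin_model a differentiable_on S"
proof -
  have "sin_model a = vec_sin \<circ> (\<lambda>w. a *v w)"
    by (simp add: fun_eq_iff sin_model_eq_vec_sin)
  moreover have "(vec_sin \<circ> (\<lambda>w. a *v w)) differentiable at w" for w
    by (rule differentiable_chain_at[OF linear_imp_differentiable[OF matrix_vector_mul_linear]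
          vec_sin_differentiable])
  ultimately show ?thesis
    by (simp add: differentiable_at_imp_differentiable_on)
qed

lemma vec_sin_close_dist_le:
  fixes u :: "real \<Rightarrow> real^'n"
  assumes cont: "continuous_on {T..} u" and near: "\<And>t. T \<le> t \<Longrightarrow> dist (vec_sin (u t)) f < 1"
    and "T \<le> t"
  shows "dist (u t) (u T) \<le> CARD('n) * (2 * pi)"
proof -
  have osc: "\<bar>u t $ i - u T $ i\<bar> \<le> 2 * pi" for i
  proof (rule sin_close_oscillation_le[OF _ \<open>T \<le> t\<close>])
    show "continuous_on {T..t} (\<lambda>r. u r $ i)"
      by (intro continuous_on_component continuous_on_subset[OF cont]) auto
    fix r assume "r \<in> {T..t}"
    then have "norm (vec_sin (u r) - f) < 1"
      using near by (simp add: dist_norm)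
    then show "\<bar>sin (u r $ i) - f $ i\<bar> < 1"
      using component_le_norm_cart[of "vec_sin (u r) - f" i] by (simp add: vec_sin_def)
  qed
  have "dist (u t) (u T) \<le> (\<Sum>i\<in>UNIV. \<bar>u t $ i - u T $ i\<bar>)"
    using norm_le_l1_cart[of "u t - u T"] by (simp add: dist_norm)
  also have "\<dots> \<le> (\<Sum>i\<in>(UNIV :: 'n set). 2 * pi)"
    using osc by (intro sum_mono)
  finally show ?thesis
    by simp
qed

lemma GF_learnable_sin_model_subset_range:
  fixes a :: "real^'w^'d"
  shows "GF_learnable (sin_model a) \<subseteq> range (sin_model a)"
proof
  fix f assume "f \<in> GF_learnable (sin_model a)"
  then obtain w where gf: "gf_solution (sin_model a) f w"
    and lim: "((\<lambda>t. vec_sin (a *v w t)) \<longlongrightarrow> f) at_top"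
    unfolding sin_model_eq_vec_sin by (rule GF_learnable_imp_tendsto)
  define u where "u t = a *v w t" for t
  obtain T0 where "\<forall>t\<ge>T0. dist (vec_sin (u t)) f < 1"
    using lim[unfolded tendsto_iff, rule_format, of 1] by (auto simp: eventually_at_top_linorder u_def)
  then obtain T where "0 \<le> T" and near: "\<And>t. T \<le> t \<Longrightarrow> dist (vec_sin (u t)) f < 1"
    by (metis max.cobounded1 max.cobounded2 order_trans)
  have "continuous_on {0..} u"
    unfolding u_def
    by (rule linear_continuous_on_compose[OF gf_solution_continuous_on[OF gf]])
      (simp add: linear_linear)
  then have u_cont: "continuous_on {T..} u"
    by (rule continuous_on_subset) (use \<open>0 \<le> T\<close> in auto)
  define K where "K = range (\<lambda>x. a *v x) \<inter> cball (u T) (CARD('d) * (2 * pi))"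
  have "closed (range (\<lambda>x. a *v x))"
    by (intro closed_subspace linear_subspace_image matrix_vector_mul_linear subspace_UNIV)
  then have "compact K"
    by (simp add: K_def compact_eq_bounded_closed closed_Int bounded_Int)
  then have "closed (vec_sin ` K)"
    by (intro compact_imp_closed compact_continuous_image continuous_on_vec_sin)
  moreover have "u t \<in> K" if "T \<le> t" for t
    using vec_sin_close_dist_le[OF u_cont near that] by (simp add: K_def u_def dist_commute)
  then have "\<forall>\<^sub>F t in at_top. vec_sin (a *v w t) \<in> vec_sin ` K"
    unfolding u_def eventually_at_top_linorder by blast
  ultimately have "f \<in> vec_sin ` K"
    using Lim_in_closed_set lim by fastforce
  then show "f \<in> range (sin_model a)"
    by (auto simp: K_def sin_model_eq_vec_sin)
qed

theorem corollary2:
  fixes a :: "real^'w^'d"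
  assumes "CARD('w) < CARD('d)"
  shows "GF_learnable (sin_model a) \<in> null_sets lebesgue"
proof -
  have "negligible (range (sin_model a))"
    using assms by (intro negligible_differentiable_image_lowdim sin_model_differentiable_on) simp
  then have "negligible (GF_learnable (sin_model a))"
    using GF_learnable_sin_model_subset_range by (rule negligible_subset)
  then show ?thesis
    by (simp add: negligible_iff_null_sets)
qed

end
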